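(* Let $\ell$ and $B$ be positive integers with $B\ge 5\cdot 2^{\ell+1}$, and let $H$ be a graph with loops allowed on an alphabet $A$ of $\ell$ letters. For any finite word $w$ over $A$ with $|w|\ge B^{\ell}$, the graph $G_{w,H}(1,2,\dots,|w|)$ contains, as an induced subgraph, a strong $\ell$-factor $G_{w',H}(1,2,\dots,|w'|)$ of order at least $B$, where $w'$ is a factor of $w$.
   Context: A word over $A$ is a map $w:\{1,\dots,n\}\to A$, $|w|=n$, $w_i=w(i)$; $w'$ is a factor of $w$ if $w'_i=w_{i+s}$ for some fixed $s\ge0$ and all $1\le i\le|w'|$. For positive integers $u_1<\dots<u_k\le|w|$, $G_{w,H}(u_1,\dots,u_k)$ has vertex set $\{u_i\}$ and $u_iu_j$ is an edge iff ($|u_i-u_j|=1$ and $w_{u_i}w_{u_j}\notin E(H)$) or ($|u_i-u_j|>1$ and $w_{u_i}w_{u_j}\in E(H)$) (loops of $H$ handle equal letters). An $\ell$-factor is a graph $G_{w,H}(u_1,\dots,u_k)$ with $u_1,\dots,u_k$ consecutive integers and $|V(H)|=\ell$. Its letter partition consists of the nonempty sets $V_a=\{u_i:w_{u_i}=a\}$, $a\in A$; it is an $(\ell,2)$-partition, and the $\ell$-factor is strong if this is a strong $(\ell,2)$-partition, i.e., every bag $V_a$ has at least $5\cdot2^{\ell}\cdot 2$ vertices. *)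

theory Defs
  imports Main
begin

text \<open>Words are lists; position i (1-based, 1 \<le> i \<le> |w|) carries letter w ! (i - 1).
  A graph H with loops allowed on the alphabet is a symmetric relation E on letters
  (E a a means a loop at a).\<close>

definition letter :: "'a list \<Rightarrow> nat \<Rightarrow> 'a" where
  "letter w i = w ! (i - 1)"

definition dist_nat :: "nat \<Rightarrow> nat \<Rightarrow> nat" where
  "dist_nat u v = (if u \<le> v then v - u else u - v)"

definition wedge :: "'a list \<Rightarrow> ('a \<Rightarrow> 'a \<Rightarrow> bool) \<Rightarrow> nat \<Rightarrow> nat \<Rightarrow> bool" where
  "wedge w E u v \<longleftrightarrow>
     (dist_nat u v = 1 \<and> \<not> E (letter w u) (letter w v)) \<or>
     (dist_nat u v > 1 \<and> E (letter w u) (letter w v))"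

definition is_factor :: "'a list \<Rightarrow> 'a list \<Rightarrow> bool" where
  "is_factor w' w \<longleftrightarrow> (\<exists>s. s + length w' \<le> length w \<and>
      (\<forall>i\<in>{1..length w'}. letter w' i = letter w (i + s)))"

definition bag :: "'a list \<Rightarrow> 'a \<Rightarrow> nat set" where
  "bag w a = {i \<in> {1..length w}. letter w i = a}"

definition strong_factor :: "nat \<Rightarrow> 'a list \<Rightarrow> bool" where
  "strong_factor l w \<longleftrightarrow> (\<forall>a. bag w a \<noteq> {} \<longrightarrow> card (bag w a) \<ge> 5 * 2 ^ l * 2)"

definition induced_sub :: "('a \<Rightarrow> 'a \<Rightarrow> bool) \<Rightarrow> 'a list \<Rightarrow> 'a list \<Rightarrow> bool" where
  "induced_sub E w' w \<longleftrightarrow> (\<exists>f. inj_on f {1..length w'} \<and> f ` {1..length w'} \<subseteq> {1..length w} \<and>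
     (\<forall>i\<in>{1..length w'}. \<forall>j\<in>{1..length w'}. wedge w' E i j \<longleftrightarrow> wedge w E (f i) (f j)))"

end

theory Submission
  imports Defs "HOL-Library.Sublist"
begin

text \<open>Induct on the number of letters occurring in the word. If every such letter occurs at least
  \<open>T = 5 * 2^l * 2\<close> times, the word itself is the required factor. Otherwise some letter \<open>a\<close> occurs
  fewer than \<open>T \<le> B\<close> times, and its occurrences cut the word into at most \<open>T\<close> gaps; as the word
  has length at least \<open>B^k\<close>, one gap has length at least \<open>B^(k-1)\<close> and avoids \<open>a\<close>, so the
  induction hypothesis applies to it. Finally, adjacency of two positions depends only on their letters and their
  distance, so a factor embeds into the whole word as an induced subgraph by translation.\<close>

lemma card_bag_eq_count_list: "card (bag w a) = count_list w a"
proof -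
  have "bag w a = Suc ` {i. i < length w \<and> w ! i = a}"
  proof (intro set_eqI iffI)
    fix x assume "x \<in> bag w a"
    then show "x \<in> Suc ` {i. i < length w \<and> w ! i = a}"
      unfolding bag_def letter_def by (intro image_eqI[where x = "x - 1"]) auto
  qed (auto simp: bag_def letter_def)
  then have "card (bag w a) = card {i. i < length w \<and> w ! i = a}"
    by (simp add: card_image)
  then show ?thesis
    by (simp add: count_list_eq_length_filter length_filter_conv_card eq_commute)
qed

lemma bag_nonempty_imp_in_set: "bag w a \<noteq> {} \<Longrightarrow> a \<in> set w"
  by (auto simp: bag_def letter_def)

lemma length_le_by_gaps:
  assumes "\<And>v. sublist v w \<Longrightarrow> a \<notin> set v \<Longrightarrow> length v < m"
  shows "length w + 1 \<le> (count_list w a + 1) * m"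
  using assms
proof (induction w rule: length_induct)
  case (1 w)
  define u where "u = takeWhile (\<lambda>x. x \<noteq> a) w"
  define r where "r = dropWhile (\<lambda>x. x \<noteq> a) w"
  have w: "w = u @ r"
    by (simp add: u_def r_def)
  have a_notin_u: "a \<notin> set u"
    unfolding u_def using set_takeWhileD by fastforce
  have length_u: "length u < m"
    using "1.prems"[of u] a_notin_u w by (simp add: sublist_def) (metis append_Nil)
  show ?case
  proof (cases r)
    case Nil
    then show ?thesis
      using w length_u a_notin_u by simp
  next
    case (Cons x r')
    have "x = a"
      using Cons unfolding r_def dropWhile_eq_Cons_conv by simp
    have "sublist v w" if "sublist v r'" for v
      using that w Cons by (auto simp: sublist_def) (metis append.assoc append_Cons)
    then have "length r' + 1 \<le> (count_list r' a + 1) * m"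
      using "1.IH" "1.prems" w Cons by simp
    then show ?thesis
      using w Cons \<open>x = a\<close> a_notin_u length_u by (simp add: algebra_simps)
  qed
qed

lemma long_gap_of_rare_letter:
  assumes "count_list w a < T" and "T \<le> B" and "B * m \<le> length w"
  obtains v where "sublist v w" "a \<notin> set v" "m \<le> length v"
proof (rule ccontr)
  assume "\<not> thesis"
  then have "\<And>v. sublist v w \<Longrightarrow> a \<notin> set v \<Longrightarrow> length v < m"
    using that by (meson not_le)
  then have "length w + 1 \<le> (count_list w a + 1) * m"
    by (rule length_le_by_gaps)
  also have "\<dots> \<le> B * m"
    using assms(1,2) by (intro mult_le_mono1) simp
  finally show False
    using assms(3) by simp
qed

lemma exists_factor_with_frequent_letters:
  assumes "0 < T" and "T \<le> B"
    and "card (set w) \<le> k" and "B ^ k \<le> length w"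
  shows "\<exists>v. sublist v w \<and> B \<le> length v \<and> (\<forall>a\<in>set v. T \<le> count_list v a)"
  using assms(3,4)
proof (induction k arbitrary: w)
  case 0
  then show ?case by simp
next
  case (Suc k)
  show ?case
  proof (cases "\<forall>a\<in>set w. T \<le> count_list w a")
    case True
    have "B \<le> B ^ Suc k"
      using assms by simp
    then show ?thesis
      using True Suc.prems by (meson order_trans sublist_order.order_refl)
  next
    case False
    then obtain a where a: "a \<in> set w" "count_list w a < T"
      by (auto simp: not_le)
    then obtain v where v: "sublist v w" "a \<notin> set v" "B ^ k \<le> length v"
      using long_gap_of_rare_letter[of w a T B "B ^ k"] assms(2) Suc.prems(2) by auto
    have "card (set v) \<le> card (set w - {a})"
      using v set_mono_sublist by (intro card_mono) auto
    then have "card (set v) \<le> k"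
      using a Suc.prems(1) by simp
    then show ?thesis
      using Suc.IH v(1,3) sublist_order.order_trans by blast
  qed
qed

lemma letter_append_shift:
  assumes "i \<in> {1..length v}"
  shows "letter (p @ v @ q) (i + length p) = letter v i"
proof -
  have "i + length p - 1 = length p + (i - 1)" and "i - 1 < length v"
    using assms by auto
  then show ?thesis
    unfolding letter_def by (simp add: nth_append)
qed

lemma sublist_is_factor:
  assumes "sublist v w"
  shows "is_factor v w"
proof -
  obtain p q where w: "w = p @ v @ q"
    using assms by (auto simp: sublist_def)
  show ?thesis
    unfolding is_factor_def w by (intro exI[where x = "length p"]) (simp add: letter_append_shift)
qed

lemma sublist_induced_sub:
  assumes "sublist v w"
  shows "induced_sub E v w"
proof -
  obtain p q where w: "w = p @ v @ q"
    using assms by (auto simp: sublist_def)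
  have "dist_nat (i + s) (j + s) = dist_nat i j" for i j s :: nat
    unfolding dist_nat_def by auto
  then have "wedge v E i j \<longleftrightarrow> wedge w E (i + length p) (j + length p)"
    if "i \<in> {1..length v}" "j \<in> {1..length v}" for i j
    using that unfolding wedge_def w by (simp add: letter_append_shift)
  moreover have "(\<lambda>i. i + length p) ` {1..length v} \<subseteq> {1..length w}"
    using w by auto
  ultimately show ?thesis
    unfolding induced_sub_def by (intro exI[where x = "\<lambda>i. i + length p"]) (auto simp: inj_on_def)
qed

theorem lemma3p12:
  fixes l B :: nat and A :: "'a set" and E :: "'a \<Rightarrow> 'a \<Rightarrow> bool" and w :: "'a list"
  assumes "l > 0" and "B > 0" and "B \<ge> 5 * 2 ^ (l + 1)"
    and "finite A" and "card A = l"
    and "\<forall>a b. E a b \<longrightarrow> a \<in> A \<and> b \<in> A"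
    and "\<forall>a b. E a b \<longrightarrow> E b a"
    and "set w \<subseteq> A"
    and "length w \<ge> B ^ l"
  shows "\<exists>w'. is_factor w' w \<and> length w' \<ge> B \<and> strong_factor l w' \<and> induced_sub E w' w"
proof -
  have "5 * 2 ^ l * 2 \<le> B"
    using assms(3) by (simp add: mult.commute)
  moreover have "card (set w) \<le> l"
    using assms(4,5,8) card_mono by blast
  ultimately obtain v where v: "sublist v w" "B \<le> length v"
    "\<forall>a\<in>set v. 5 * 2 ^ l * 2 \<le> count_list v a"
    using exists_factor_with_frequent_letters[of "5 * 2 ^ l * 2" B w l] assms(9) by auto
  then have "strong_factor l v"
    unfolding strong_factor_def by (metis bag_nonempty_imp_in_set card_bag_eq_count_list)
  then show ?thesis
    using v sublist_is_factor sublist_induced_sub by blast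
qed

end
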